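(* Let $\nu$ be a charge on $\mathbb{C}$ with compact support, $q\in\mathbb{N}_0$, and suppose that for some $r_0>0$ the integrals $\int_{D(r_0)\cap\mathbb{C}^{\rm up}}\operatorname{Im}\frac1{z^k}\,d\nu(z)$, $1\le k\le q$, converge. Then for all $t\in\mathbb{R}$ $$(\nu^{\mathrm{bal}[q]})^{\mathbb{R}}(t)=(\nu^{\mathrm{bal}})^{\mathbb{R}}(t)+\frac1\pi\sum_{k=1}^q\Bigl(\int_{\mathbb{C}^{\rm up}}\operatorname{Im}\frac1{z^k}\,d\nu(z)\Bigr)\frac{t^k}{k},$$ $$(\nu^{\mathrm{bal}[q]})^+\le|\nu^{\mathrm{bal}[q]}|\le|\nu^{\mathrm{bal}}|+\frac1\pi\sum_{k=1}^q\Bigl|\int_{\mathbb{C}^{\rm up}}\operatorname{Im}\frac1{z^k}\,d\nu(z)\Bigr|\lambda^{[k]},$$ and if $\nu$ is a positive measure, $(\nu^{\mathrm{bal}[q]})^-\le\frac1\pi\sum_{k=1}^q\bigl|\int_{\mathbb{C}^{\rm up}}\operatorname{Im}\frac1{z^k}\,d\nu(z)\bigr|\lambda^{[k]}$, where $\lambda^{[k]}$ is the measure on $\mathbb{R}$ with $d\lambda^{[k]}(t)=|t|^{k-1}dt$.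
   Context: A charge is a real Borel signed measure on $\mathbb{C}$ finite on bounded sets; $|\nu|,\nu^+,\nu^-$ are total, upper, lower variations. $\mathbb{C}^{\rm up}=\{\operatorname{Im}z>0\}$, $\mathbb{C}_{\overline{\rm lw}}=\mathbb{C}\setminus\mathbb{C}^{\rm up}$, $D(r)=\{|z|<r\}$. For $z\in\mathbb{C}^{\rm up}$ and bounded Borel $B$: $\omega(z,B)=\frac1\pi\int_{B\cap\mathbb{R}}\operatorname{Im}\frac1{t-z}dt$, $\Omega^{[q]}(z,B)=\omega(z,B)+\frac1\pi\sum_{k=1}^q\operatorname{Im}(z^{-k})\int_{B\cap\mathbb{R}}t^{k-1}dt$. The balayage of genus $q$ of $\nu$ from $\mathbb{C}^{\rm up}$ is the charge $\nu^{\mathrm{bal}[q]}(B)=\int_{\mathbb{C}^{\rm up}}\Omega^{[q]}(z,B)d\nu(z)+\nu(B\cap\mathbb{C}_{\overline{\rm lw}})$; $\nu^{\mathrm{bal}}:=\nu^{\mathrm{bal}[0]}$. For a charge $\mu$, $\mu^{\mathbb{R}}(x)=\mu([0,x])$ for $x\ge0$ and $\mu^{\mathbb{R}}(x)=-\mu([x,0))$ for $x<0$. *)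

theory Defs
  imports "HOL-Analysis.Analysis"
begin

text \<open>A compactly supported charge \<nu> on the complex plane is represented by its Jordan
decomposition (P, N): two finite Borel measures on complex numbers, mutually singular,
both supported in a compact set. Then \<nu>(B) = P(B) - N(B), |\<nu>| = P + N.\<close>

definition jordan_charge :: "complex measure \<Rightarrow> complex measure \<Rightarrow> bool" where
  "jordan_charge P N \<longleftrightarrow>
     sets P = sets borel \<and> sets N = sets borel \<and> finite_measure P \<and> finite_measure N \<and>
     (\<exists>A\<in>sets borel. emeasure P (- A) = 0 \<and> emeasure N A = 0)"

definition compact_support :: "complex measure \<Rightarrow> complex measure \<Rightarrow> bool" where
  "compact_support P N \<longleftrightarrow>
     (\<exists>K. compact K \<and> emeasure P (- K) = 0 \<and> emeasure N (- K) = 0)"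

definition chg :: "complex measure \<Rightarrow> complex measure \<Rightarrow> complex set \<Rightarrow> real" where
  "chg P N B = measure P B - measure N B"

definition cint :: "complex measure \<Rightarrow> complex measure \<Rightarrow> complex set \<Rightarrow> (complex \<Rightarrow> real) \<Rightarrow> real" where
  "cint P N S f = (LINT z:S|P. f z) - (LINT z:S|N. f z)"

definition Cup :: "complex set" where "Cup = {z. Im z > 0}"
definition Clw :: "complex set" where "Clw = - Cup"

definition rtrace :: "complex set \<Rightarrow> real set" where
  "rtrace B = {t. complex_of_real t \<in> B}"

definition omega :: "complex \<Rightarrow> complex set \<Rightarrow> real" where
  "omega z B = (1 / pi) * (LINT t:rtrace B|lborel. Im (1 / (complex_of_real t - z)))"

definition Omega :: "nat \<Rightarrow> complex \<Rightarrow> complex set \<Rightarrow> real" where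
  "Omega q z B = omega z B +
     (1 / pi) * (\<Sum>k=1..q. Im (1 / z ^ k) * (LINT t:rtrace B|lborel. t ^ (k - 1)))"

text \<open>Balayage of genus q of the charge (P,N) from the upper half-plane.\<close>
definition bal :: "nat \<Rightarrow> complex measure \<Rightarrow> complex measure \<Rightarrow> complex set \<Rightarrow> real" where
  "bal q P N B = cint P N Cup (\<lambda>z. Omega q z B) + chg P N (B \<inter> Clw)"

definition distR :: "(complex set \<Rightarrow> real) \<Rightarrow> real \<Rightarrow> real" where
  "distR \<mu> x = (if 0 \<le> x then \<mu> (complex_of_real ` {0..x})
                 else - \<mu> (complex_of_real ` {x..<0}))"

definition pos_var :: "(complex set \<Rightarrow> real) \<Rightarrow> complex set \<Rightarrow> ereal" where
  "pos_var \<mu> B = (SUP A \<in> {A. A \<in> sets borel \<and> A \<subseteq> B}. ereal (\<mu> A))"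

definition neg_var :: "(complex set \<Rightarrow> real) \<Rightarrow> complex set \<Rightarrow> ereal" where
  "neg_var \<mu> B = (SUP A \<in> {A. A \<in> sets borel \<and> A \<subseteq> B}. ereal (- \<mu> A))"

definition tot_var :: "(complex set \<Rightarrow> real) \<Rightarrow> complex set \<Rightarrow> ereal" where
  "tot_var \<mu> B = (SUP F \<in> {F. finite F \<and> disjoint F \<and> F \<subseteq> sets borel \<and> \<Union>F \<subseteq> B}.
                    ereal (\<Sum>A\<in>F. \<bar>\<mu> A\<bar>))"

definition lam :: "nat \<Rightarrow> complex set \<Rightarrow> real" where
  "lam k B = (LINT t:rtrace B|lborel. \<bar>t\<bar> ^ (k - 1))"

end

theory Submission
  imports Defs
begin

text \<open>The difference of the kernels, \<open>Omega q z B - omega z B\<close>, is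
  \<open>1/pi * (\<Sum>k=1..q. Im (1 / z ^ k) * \<integral>\<^bsub>B \<inter> \<real>\<^esub> t ^ (k - 1) dt)\<close>, so integrating it against the
  charge over the upper half-plane shows that the two balayages differ by
  \<open>1/pi * (\<Sum>k=1..q. c k * \<integral>\<^bsub>B \<inter> \<real>\<^esub> t ^ (k - 1) dt)\<close>, where \<open>c k\<close> is the integral of
  \<open>Im (1 / z ^ k)\<close>; it exists because this function is bounded away from the origin and the
  charge is finite. On \<open>[0, t]\<close> the correction is \<open>c k * t ^ k / k\<close>, which gives the
  distribution functions, and on any set it is bounded by \<open>\<bar>c k\<bar> * lam k B\<close>; additivity
  of \<open>lam k\<close> turns this into the bound on the total variation. For a positive measure the
  genus-0 balayage is nonnegative because the harmonic measure \<open>omega\<close> is, so only the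
  correction contributes to the lower variation.\<close>

lemma rtrace_borel: "A \<in> sets borel \<Longrightarrow> rtrace A \<in> sets borel"
proof -
  assume A: "A \<in> sets borel"
  have "complex_of_real \<in> borel_measurable borel"
    by (intro borel_measurable_continuous_onI continuous_intros)
  from measurable_sets_borel[OF this A] show ?thesis
    by (simp add: rtrace_def vimage_def)
qed

lemma rtrace_of_real_image [simp]: "rtrace (complex_of_real ` S) = S"
  by (auto simp: rtrace_def)

lemma of_real_image_borel:
  assumes "S \<in> sets borel"
  shows "complex_of_real ` S \<in> sets borel"
proof -
  have Re: "Re \<in> borel_measurable borel" and Im: "Im \<in> borel_measurable borel"
    by (intro borel_measurable_continuous_onI continuous_intros)+
  have "complex_of_real ` S = Re -` S \<inter> Im -` {0}"
    by (auto simp: complex_eq_iff intro!: image_eqI[where x = "Re _"])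
  moreover have "Re -` S \<in> sets borel"
    using measurable_sets_borel[OF Re assms] .
  moreover have "Im -` {0} \<in> sets borel"
    using measurable_sets_borel[OF Im] by simp
  ultimately show ?thesis by simp
qed

lemma bounded_of_real_image: "bounded S \<Longrightarrow> bounded (complex_of_real ` S)"
  by (rule bounded_linear_image) (auto intro: bounded_linear_of_real)

lemma rtrace_subset_interval:
  assumes "bounded A"
  obtains R where "0 \<le> R" "rtrace A \<subseteq> {-R..R}"
proof -
  from assms obtain a where "\<forall>x\<in>A. norm x \<le> a" by (auto simp: bounded_iff)
  then have "rtrace A \<subseteq> {-max a 0..max a 0}" by (force simp: rtrace_def abs_le_iff)
  then show ?thesis using that by (meson max.cobounded2)
qed

lemma set_integrable_rtrace:
  fixes f :: "real \<Rightarrow> real"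
  assumes f: "continuous_on UNIV f" and A: "A \<in> sets borel" "bounded A"
  shows "set_integrable lborel (rtrace A) f"
proof -
  obtain R where R: "rtrace A \<subseteq> {-R..R}" using rtrace_subset_interval[OF A(2)] .
  have "set_integrable lborel {-R..R} f"
    using continuous_on_subset[OF f] by (intro borel_integrable_atLeastAtMost') simp
  then show ?thesis
    by (rule set_integrable_subset) (use R rtrace_borel[OF A(1)] in simp_all)
qed

lemma Cup_borel: "Cup \<in> sets borel"
  unfolding Cup_def by (intro borel_open open_Collect_less continuous_intros)

lemma Im_inverse_of_real_minus:
  "Im (1 / (complex_of_real t - z)) = Im z / ((t - Re z)\<^sup>2 + (Im z)\<^sup>2)"
  by (simp add: Im_divide power2_eq_square algebra_simps)

lemma Poisson_kernel_integral_interval: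
  fixes x y R :: real
  assumes y: "0 < y" and R: "0 \<le> R"
  shows "(LINT t:{-R..R}|lborel. y / ((t - x)\<^sup>2 + y\<^sup>2)) = arctan ((R - x) / y) - arctan ((-R - x) / y)"
proof -
  have "integral\<^sup>L lborel (\<lambda>t. indicator {-R..R} t *\<^sub>R (y / ((t - x)\<^sup>2 + y\<^sup>2)))
      = arctan ((R - x) / y) - arctan ((-R - x) / y)"
  proof (rule integral_FTC_atLeastAtMost)
    show "- R \<le> R" using R by simp
    fix t
    have "((\<lambda>t. arctan ((t - x) / y)) has_real_derivative y / ((t - x)\<^sup>2 + y\<^sup>2)) (at t)"
      using y by (auto intro!: derivative_eq_intros simp: field_simps power2_eq_square)
    then show "((\<lambda>t. arctan ((t - x) / y)) has_vector_derivative y / ((t - x)\<^sup>2 + y\<^sup>2)) (at t within {-R..R})"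
      by (auto simp: has_real_derivative_iff_has_vector_derivative[symmetric] intro: has_field_derivative_at_within)
  next
    have "0 < (t - x)\<^sup>2 + y\<^sup>2" for t
      using y by (simp add: add_nonneg_pos)
    then show "continuous_on {-R..R} (\<lambda>t. y / ((t - x)\<^sup>2 + y\<^sup>2))"
      by (intro continuous_intros) (metis less_irrefl)
  qed
  then show ?thesis by (simp add: set_lebesgue_integral_def)
qed

lemma omega_bounds:
  assumes A: "A \<in> sets borel" "bounded A" and z: "0 < Im z"
  shows "0 \<le> omega z A" "omega z A \<le> 1"
proof -
  obtain R where R: "0 \<le> R" "rtrace A \<subseteq> {-R..R}" using rtrace_subset_interval[OF A(2)] .
  define f where "f t = Im z / ((t - Re z)\<^sup>2 + (Im z)\<^sup>2)" for t
  have f_nonneg: "0 \<le> f t" for t using z by (simp add: f_def)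
  have omega_eq: "omega z A = (1 / pi) * (LINT t:rtrace A|lborel. f t)"
    by (simp add: omega_def f_def Im_inverse_of_real_minus)
  have "0 < (t - Re z)\<^sup>2 + (Im z)\<^sup>2" for t
    using z by (simp add: add_nonneg_pos)
  then have f_cont: "continuous_on UNIV f"
    unfolding f_def by (intro continuous_intros) (metis less_irrefl)
  have "0 \<le> (LINT t:rtrace A|lborel. f t)"
    unfolding set_lebesgue_integral_def by (rule Bochner_Integration.integral_nonneg) (simp add: f_nonneg)
  then show "0 \<le> omega z A" by (simp add: omega_eq)
  have "(LINT t:rtrace A|lborel. f t) \<le> (LINT t:{-R..R}|lborel. f t)"
    using set_integrable_rtrace[OF f_cont A] borel_integrable_atLeastAtMost'[OF continuous_on_subset[OF f_cont]]
    unfolding set_lebesgue_integral_def set_integrable_def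
    by (rule integral_mono) (use R f_nonneg in \<open>auto simp: indicator_def\<close>)
  also have "\<dots> = arctan ((R - Re z) / Im z) - arctan ((-R - Re z) / Im z)"
    unfolding f_def by (rule Poisson_kernel_integral_interval[OF z R(1)])
  also have "\<dots> \<le> pi"
    using arctan_ubound[of "(R - Re z) / Im z"] arctan_lbound[of "(-R - Re z) / Im z"] by linarith
  finally show "omega z A \<le> 1" by (simp add: omega_eq)
qed

lemma borel_measurable_omega:
  assumes A: "A \<in> sets borel"
  shows "(\<lambda>z. omega z A) \<in> borel_measurable borel"
proof -
  have "(\<lambda>p::complex \<times> real. complex_of_real (snd p) - fst p) \<in> borel_measurable borel"
    by (intro borel_measurable_continuous_onI continuous_intros)
  then have "(\<lambda>p::complex \<times> real. Im (1 / (complex_of_real (snd p) - fst p))) \<in> borel_measurable borel"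
    by measurable
  then have "(\<lambda>(z, t). indicator (rtrace A) t *\<^sub>R Im (1 / (complex_of_real t - z)))
      \<in> borel_measurable (borel \<Otimes>\<^sub>M lborel)"
    using rtrace_borel[OF A]
    by (simp add: case_prod_beta' measurable_cong_sets[OF sets_pair_measure_cong[OF refl sets_lborel] refl]
        flip: borel_prod) measurable
  then have "(\<lambda>z. LINT t:rtrace A|lborel. Im (1 / (complex_of_real t - z))) \<in> borel_measurable borel"
    unfolding set_lebesgue_integral_def by (rule lborel.borel_measurable_lebesgue_integral)
  then show ?thesis unfolding omega_def by measurable
qed

lemma set_integral_power_interval:
  fixes a b :: real
  assumes "a \<le> b" "1 \<le> k"
  shows "(LINT s:{a..b}|lborel. s ^ (k - 1)) = (b ^ k - a ^ k) / real k"
proof -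
  have "integral\<^sup>L lborel (\<lambda>s. indicator {a..b} s *\<^sub>R s ^ (k - 1)) = b ^ k / real k - a ^ k / real k"
  proof (rule integral_FTC_atLeastAtMost[OF assms(1)])
    fix s
    have "((\<lambda>s. s ^ k / real k) has_real_derivative s ^ (k - 1)) (at s)"
      using assms(2) by (auto intro!: derivative_eq_intros)
    then show "((\<lambda>s. s ^ k / real k) has_vector_derivative s ^ (k - 1)) (at s within {a..b})"
      by (auto simp: has_real_derivative_iff_has_vector_derivative[symmetric] intro: has_field_derivative_at_within)
  qed (intro continuous_intros)
  then show ?thesis by (simp add: set_lebesgue_integral_def diff_divide_distrib)
qed

lemma set_integral_power_atLeastLessThan:
  fixes a b :: real
  assumes "a \<le> b" "1 \<le> k"
  shows "(LINT s:{a..<b}|lborel. s ^ (k - 1)) = (b ^ k - a ^ k) / real k"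
proof -
  have "AE s in lborel. s \<in> {a..b} \<longleftrightarrow> s \<in> {a..<b}"
    by (rule AE_I'[of "{b}"]) auto
  moreover have "set_borel_measurable lborel S (\<lambda>s::real. s ^ (k - 1))" if "S \<in> sets borel" for S
    using that unfolding set_borel_measurable_def by measurable
  ultimately have "(LINT s:{a..<b}|lborel. s ^ (k - 1)) = (LINT s:{a..b}|lborel. s ^ (k - 1))"
    by (intro set_integral_cong_set) auto
  then show ?thesis using set_integral_power_interval[OF assms] by simp
qed

lemma abs_set_integral_power_le_lam: "\<bar>LINT t:rtrace A|lborel. t ^ (k - 1)\<bar> \<le> lam k A"
proof -
  have "\<bar>LINT t:rtrace A|lborel. t ^ (k - 1)\<bar> \<le> integral\<^sup>L lborel (\<lambda>t. norm (indicator (rtrace A) t *\<^sub>R t ^ (k - 1)))"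
    unfolding set_lebesgue_integral_def using integral_norm_bound by (metis real_norm_def)
  also have "\<dots> = lam k A"
    unfolding lam_def set_lebesgue_integral_def
    by (rule Bochner_Integration.integral_cong) (auto simp: indicator_def power_abs)
  finally show ?thesis .
qed

lemma sum_lam_le:
  assumes F: "finite F" "disjoint F" "F \<subseteq> sets borel" "\<Union>F \<subseteq> B"
    and B: "B \<in> sets borel" "bounded B"
  shows "(\<Sum>A\<in>F. lam k A) \<le> lam k B"
proof -
  let ?g = "\<lambda>t::real. \<bar>t\<bar> ^ (k - 1)"
  have g_cont: "continuous_on UNIV ?g" by (intro continuous_intros)
  have "set_integrable lborel (rtrace A) ?g" if "A \<in> F" for A
    using that F B bounded_subset by (intro set_integrable_rtrace[OF g_cont]) blast+
  then have "(\<Sum>A\<in>F. lam k A) = integral\<^sup>L lborel (\<lambda>t. \<Sum>A\<in>F. indicator (rtrace A) t *\<^sub>R ?g t)"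
    unfolding lam_def set_lebesgue_integral_def
    by (intro Bochner_Integration.integral_sum[symmetric]) (simp add: set_integrable_def)
  also have "\<dots> = integral\<^sup>L lborel (\<lambda>t. indicator (\<Union>A\<in>F. rtrace A) t *\<^sub>R ?g t)"
  proof -
    have "disjoint_family_on rtrace F"
      using F(2) unfolding disjoint_family_on_def disjoint_def rtrace_def by blast
    then show ?thesis
      by (simp add: indicator_UN_disjoint[OF F(1)] sum_distrib_right)
  qed
  also have "\<dots> \<le> integral\<^sup>L lborel (\<lambda>t. indicator (rtrace B) t *\<^sub>R ?g t)"
  proof (rule integral_mono)
    have "(\<Union>A\<in>F. rtrace A) \<in> sets lborel"
      using F(1,3) unfolding sets_lborel by (intro sets.finite_UN) (auto intro: rtrace_borel)
    moreover have "(\<Union>A\<in>F. rtrace A) \<subseteq> rtrace B"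
      using F(4) by (auto simp: rtrace_def)
    ultimately show "integrable lborel (\<lambda>t. indicator (\<Union>A\<in>F. rtrace A) t *\<^sub>R ?g t)"
      using set_integrable_subset[OF set_integrable_rtrace[OF g_cont B]]
      by (simp add: set_integrable_def)
    show "integrable lborel (\<lambda>t. indicator (rtrace B) t *\<^sub>R ?g t)"
      using set_integrable_rtrace[OF g_cont B] by (simp add: set_integrable_def)
    show "indicator (\<Union>A\<in>F. rtrace A) t *\<^sub>R ?g t \<le> indicator (rtrace B) t *\<^sub>R ?g t" for t
      using F(4) by (auto simp: indicator_def rtrace_def)
  qed
  also have "\<dots> = lam k B" by (simp add: lam_def set_lebesgue_integral_def)
  finally show ?thesis .
qed

lemma Omega_0 [simp]: "Omega 0 z B = omega z B"
  by (simp add: Omega_def)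

lemma set_integrable_Im_inverse_power:
  assumes M: "finite_measure M" "sets M = sets borel" and S: "S \<in> sets borel" and r: "0 < r"
    and near_0: "set_integrable M (ball 0 r \<inter> S) (\<lambda>z. Im (1 / z ^ k))"
  shows "set_integrable M S (\<lambda>z. Im (1 / z ^ k))"
proof -
  have S_far: "S - ball 0 r \<in> sets M" using M(2) S by auto
  have bound: "\<bar>Im (1 / z ^ k)\<bar> \<le> 1 / r ^ k" if "z \<in> S - ball 0 r" for z
  proof -
    have "r \<le> norm z" using that by auto
    then have "1 / norm z ^ k \<le> 1 / r ^ k"
      using r by (intro divide_left_mono power_mono mult_pos_pos zero_less_power) auto
    moreover have "\<bar>Im (1 / z ^ k)\<bar> \<le> norm (1 / z ^ k)" by (rule abs_Im_le_cmod)
    ultimately show ?thesis by (simp add: norm_divide norm_power)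
  qed
  have "set_integrable M (S - ball 0 r) (\<lambda>z. Im (1 / z ^ k))"
    unfolding set_integrable_def
  proof (rule finite_measure.integrable_const_bound[OF M(1), where B = "1 / r ^ k"])
    show "AE z in M. norm (indicat_real (S - ball 0 r) z *\<^sub>R Im (1 / z ^ k)) \<le> 1 / r ^ k"
      using bound r by (intro AE_I2) (simp add: indicator_def)
    show "(\<lambda>z. indicat_real (S - ball 0 r) z *\<^sub>R Im (1 / z ^ k)) \<in> borel_measurable M"
    proof (intro borel_measurable_scaleR borel_measurable_indicator S_far)
      show "(\<lambda>z. Im (1 / z ^ k)) \<in> borel_measurable M"
        by (subst measurable_cong_sets[OF M(2) refl]) measurable
    qed
  qed
  then have "set_integrable M ((ball 0 r \<inter> S) \<union> (S - ball 0 r)) (\<lambda>z. Im (1 / z ^ k))"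
    by (rule set_integrable_Un[OF near_0]) (use M(2) S S_far in auto)
  moreover have "(ball 0 r \<inter> S) \<union> (S - ball 0 r) = S" by auto
  ultimately show ?thesis by simp
qed

lemma set_integrable_omega:
  assumes M: "finite_measure M" "sets M = sets borel" and A: "A \<in> sets borel" "bounded A"
  shows "set_integrable M Cup (\<lambda>z. omega z A)"
  unfolding set_integrable_def
proof (rule finite_measure.integrable_const_bound[OF M(1), where B = 1])
  show "(\<lambda>z. indicat_real Cup z *\<^sub>R omega z A) \<in> borel_measurable M"
    using borel_measurable_omega[OF A(1)] Cup_borel M(2)
    by (intro borel_measurable_scaleR borel_measurable_indicator) (simp_all add: measurable_cong_sets[OF M(2) refl])
  show "AE z in M. norm (indicat_real Cup z *\<^sub>R omega z A) \<le> 1"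
    by (rule AE_I2) (use omega_bounds[OF A] in \<open>auto simp: indicator_def Cup_def\<close>)
qed

lemma set_integral_Omega:
  assumes M: "finite_measure M" "sets M = sets borel" and A: "A \<in> sets borel" "bounded A"
    and I: "\<And>k. k \<in> {1..q} \<Longrightarrow> set_integrable M Cup (\<lambda>z. Im (1 / z ^ k))"
  shows "(LINT z:Cup|M. Omega q z A) = (LINT z:Cup|M. omega z A) +
     (1 / pi) * (\<Sum>k=1..q. (LINT z:Cup|M. Im (1 / z ^ k)) * (LINT t:rtrace A|lborel. t ^ (k - 1)))"
proof -
  define c where "c k = (LINT t:rtrace A|lborel. t ^ (k - 1))" for k
  define g where "g k z = indicator Cup z *\<^sub>R (Im (1 / z ^ k) * c k)" for k z
  have g_int: "integrable M (g k)" if "k \<in> {1..q}" for k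
    using I[OF that] unfolding g_def set_integrable_def
    by (simp add: mult.assoc[symmetric])
  have "(LINT z:Cup|M. \<Sum>k=1..q. Im (1 / z ^ k) * c k) = integral\<^sup>L M (\<lambda>z. \<Sum>k=1..q. g k z)"
    unfolding set_lebesgue_integral_def g_def by (simp only: scaleR_sum_right)
  also have "\<dots> = (\<Sum>k=1..q. integral\<^sup>L M (g k))"
    using g_int by (rule Bochner_Integration.integral_sum)
  also have "\<dots> = (\<Sum>k=1..q. (LINT z:Cup|M. Im (1 / z ^ k)) * c k)"
    unfolding g_def set_lebesgue_integral_def[symmetric] by simp
  finally have sum_eq: "(LINT z:Cup|M. \<Sum>k=1..q. Im (1 / z ^ k) * c k) =
      (\<Sum>k=1..q. (LINT z:Cup|M. Im (1 / z ^ k)) * c k)" .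
  have sum_int: "set_integrable M Cup (\<lambda>z. \<Sum>k=1..q. Im (1 / z ^ k) * c k)"
    unfolding set_integrable_def using g_int
    unfolding g_def scaleR_sum_right by (rule Bochner_Integration.integrable_sum)
  have "(LINT z:Cup|M. Omega q z A) =
      (LINT z:Cup|M. omega z A + (1 / pi) * (\<Sum>k=1..q. Im (1 / z ^ k) * c k))"
    by (simp add: Omega_def c_def mult.commute)
  also have "\<dots> = (LINT z:Cup|M. omega z A) + (LINT z:Cup|M. (1 / pi) * (\<Sum>k=1..q. Im (1 / z ^ k) * c k))"
    using set_integrable_omega[OF M A] sum_int by (simp only: set_integral_add set_integrable_mult_right)
  also have "\<dots> = (LINT z:Cup|M. omega z A) + (1 / pi) * (\<Sum>k=1..q. (LINT z:Cup|M. Im (1 / z ^ k)) * c k)"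
    by (simp only: set_integral_mult_right sum_eq)
  finally show ?thesis by (simp add: c_def)
qed

lemma nonneg_charge_lower_null:
  assumes charge: "jordan_charge P N" and nonneg: "\<forall>B\<in>sets borel. 0 \<le> chg P N B"
  shows "AE z in N. False"
proof -
  from charge obtain S where S: "S \<in> sets borel" "emeasure P (- S) = 0" "emeasure N S = 0"
    and sN: "sets N = sets borel" and fN: "finite_measure N"
    unfolding jordan_charge_def by blast
  have "0 \<le> chg P N (- S)" using nonneg S(1) by auto
  moreover have "measure P (- S) = 0" using S(2) by (simp add: measure_def)
  ultimately have "measure N (- S) = 0" by (simp add: chg_def antisym)
  then have null_compl: "- S \<in> null_sets N"
    using S(1) sN finite_measure.emeasure_eq_measure[OF fN] by (auto intro: null_setsI)
  have null: "S \<in> null_sets N" using S sN by (auto intro: null_setsI)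
  show ?thesis using AE_not_in[OF null] AE_not_in[OF null_compl] by eventually_elim auto
qed

lemma pos_var_le_tot_var: "pos_var \<mu> B \<le> tot_var \<mu> B"
  unfolding pos_var_def
proof (rule SUP_least)
  fix A assume A: "A \<in> {A. A \<in> sets borel \<and> A \<subseteq> B}"
  have "ereal (\<mu> A) \<le> ereal (\<Sum>X\<in>{A}. \<bar>\<mu> X\<bar>)" by simp
  also have "\<dots> \<le> tot_var \<mu> B"
    unfolding tot_var_def by (rule SUP_upper) (use A in \<open>auto simp: disjoint_def\<close>)
  finally show "ereal (\<mu> A) \<le> tot_var \<mu> B" .
qed

lemma tot_var_le_add:
  assumes le: "\<And>A. A \<in> sets borel \<Longrightarrow> A \<subseteq> B \<Longrightarrow> \<bar>\<mu> A\<bar> \<le> \<bar>\<nu> A\<bar> + m A"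
    and sum_le: "\<And>F. finite F \<Longrightarrow> disjoint F \<Longrightarrow> F \<subseteq> sets borel \<Longrightarrow> \<Union>F \<subseteq> B \<Longrightarrow>
      (\<Sum>A\<in>F. m A) \<le> c"
  shows "tot_var \<mu> B \<le> tot_var \<nu> B + ereal c"
  unfolding tot_var_def
proof (rule SUP_least)
  fix F assume F: "F \<in> {F. finite F \<and> disjoint F \<and> F \<subseteq> sets borel \<and> \<Union>F \<subseteq> B}"
  then have "(\<Sum>A\<in>F. \<bar>\<mu> A\<bar>) \<le> (\<Sum>A\<in>F. \<bar>\<nu> A\<bar> + m A)"
    by (intro sum_mono le) auto
  also have "\<dots> \<le> (\<Sum>A\<in>F. \<bar>\<nu> A\<bar>) + c"
    using sum_le F by (simp add: sum.distrib)
  finally have "ereal (\<Sum>A\<in>F. \<bar>\<mu> A\<bar>) \<le> ereal (\<Sum>A\<in>F. \<bar>\<nu> A\<bar>) + ereal c"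
    by simp
  also have "\<dots> \<le> (SUP F \<in> {F. finite F \<and> disjoint F \<and> F \<subseteq> sets borel \<and> \<Union>F \<subseteq> B}.
      ereal (\<Sum>A\<in>F. \<bar>\<nu> A\<bar>)) + ereal c"
    by (intro add_right_mono SUP_upper F)
  finally show "ereal (\<Sum>A\<in>F. \<bar>\<mu> A\<bar>) \<le> \<dots>" .
qed

locale balayage_charge =
  fixes P N :: "complex measure" and q :: nat
  assumes jordan: "jordan_charge P N"
    and integrable_P: "\<And>k. k \<in> {1..q} \<Longrightarrow> set_integrable P Cup (\<lambda>z. Im (1 / z ^ k))"
    and integrable_N: "\<And>k. k \<in> {1..q} \<Longrightarrow> set_integrable N Cup (\<lambda>z. Im (1 / z ^ k))"
begin

abbreviation Im_moment :: "nat \<Rightarrow> real" where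
  "Im_moment k \<equiv> cint P N Cup (\<lambda>z. Im (1 / z ^ k))"

abbreviation correction :: "complex set \<Rightarrow> real" where
  "correction B \<equiv> (1 / pi) * (\<Sum>k=1..q. \<bar>Im_moment k\<bar> * lam k B)"

lemma finite_measures: "finite_measure P" "sets P = sets borel" "finite_measure N" "sets N = sets borel"
  using jordan unfolding jordan_charge_def by auto

lemma bal_eq:
  assumes "A \<in> sets borel" "bounded A"
  shows "bal q P N A = bal 0 P N A + (1 / pi) * (\<Sum>k=1..q. Im_moment k * (LINT t:rtrace A|lborel. t ^ (k - 1)))"
  using set_integral_Omega[OF finite_measures(1,2) assms integrable_P]
    set_integral_Omega[OF finite_measures(3,4) assms integrable_N]
  unfolding bal_def cint_def Omega_0
  by (simp add: left_diff_distrib sum_subtractf right_diff_distrib)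

lemma abs_bal_diff_le:
  assumes "A \<in> sets borel" "bounded A"
  shows "\<bar>bal q P N A - bal 0 P N A\<bar> \<le> correction A"
proof -
  have "\<bar>\<Sum>k=1..q. Im_moment k * (LINT t:rtrace A|lborel. t ^ (k - 1))\<bar>
      \<le> (\<Sum>k=1..q. \<bar>Im_moment k\<bar> * \<bar>LINT t:rtrace A|lborel. t ^ (k - 1)\<bar>)"
    unfolding abs_mult[symmetric] by (rule sum_abs)
  also have "\<dots> \<le> (\<Sum>k=1..q. \<bar>Im_moment k\<bar> * lam k A)"
    by (intro sum_mono mult_left_mono abs_set_integral_power_le_lam) simp
  finally show ?thesis
    by (simp add: bal_eq[OF assms] abs_mult divide_right_mono)
qed

lemma sum_correction_le:
  assumes "finite F" "disjoint F" "F \<subseteq> sets borel" "\<Union>F \<subseteq> B" "B \<in> sets borel" "bounded B"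
  shows "(\<Sum>A\<in>F. correction A) \<le> correction B"
proof -
  have "(\<Sum>A\<in>F. correction A) = (1 / pi) * (\<Sum>k=1..q. \<bar>Im_moment k\<bar> * (\<Sum>A\<in>F. lam k A))"
    by (simp add: sum_distrib_left sum.swap[of _ F])
  also have "\<dots> \<le> correction B"
    using sum_lam_le[OF assms] by (intro mult_left_mono sum_mono) auto
  finally show ?thesis .
qed

lemma distR_bal:
  "distR (bal q P N) t = distR (bal 0 P N) t + (1 / pi) * (\<Sum>k=1..q. Im_moment k * t ^ k / real k)"
proof (cases "0 \<le> t")
  case True
  let ?A = "complex_of_real ` {0..t}"
  have A: "?A \<in> sets borel" "bounded ?A"
    by (simp_all add: of_real_image_borel bounded_of_real_image)
  have "Im_moment k * (LINT s:rtrace ?A|lborel. s ^ (k - 1)) = Im_moment k * t ^ k / real k"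
    if "k \<in> {1..q}" for k
    using set_integral_power_interval[OF True, of k] that by simp
  then show ?thesis
    using True by (simp add: distR_def bal_eq[OF A] del: rtrace_of_real_image)
next
  case False
  let ?A = "complex_of_real ` {t..<0}"
  have A: "?A \<in> sets borel" "bounded ?A"
    by (simp_all add: of_real_image_borel bounded_of_real_image)
  have "Im_moment k * (LINT s:rtrace ?A|lborel. s ^ (k - 1)) = - (Im_moment k * t ^ k / real k)"
    if "k \<in> {1..q}" for k
    using set_integral_power_atLeastLessThan[of t 0 k] that False by (simp add: power_0_left)
  then show ?thesis
    using False by (simp add: distR_def bal_eq[OF A] sum_negf del: rtrace_of_real_image)
qed

lemma tot_var_bal_le:
  assumes B: "B \<in> sets borel" "bounded B"
  shows "tot_var (bal q P N) B \<le> tot_var (bal 0 P N) B + ereal (correction B)"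
proof (rule tot_var_le_add)
  fix A assume "A \<in> sets borel" "A \<subseteq> B"
  then show "\<bar>bal q P N A\<bar> \<le> \<bar>bal 0 P N A\<bar> + correction A"
    using abs_bal_diff_le bounded_subset[OF B(2)] by fastforce
qed (use sum_correction_le B in auto)

lemma bal_0_nonneg:
  assumes nonneg: "\<forall>B\<in>sets borel. 0 \<le> chg P N B" and A: "A \<in> sets borel" "bounded A"
  shows "0 \<le> bal 0 P N A"
proof -
  have "(LINT z:Cup|N. omega z A) = 0"
    using nonneg_charge_lower_null[OF jordan nonneg] unfolding set_lebesgue_integral_def
    by (intro integral_eq_zero_AE) (auto elim: AE_mp)
  moreover have "0 \<le> (LINT z:Cup|P. omega z A)"
    unfolding set_lebesgue_integral_def
    by (rule Bochner_Integration.integral_nonneg) (use omega_bounds(1)[OF A] in \<open>auto simp: indicator_def Cup_def\<close>)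
  moreover have "0 \<le> chg P N (A \<inter> Clw)"
    using nonneg A(1) Cup_borel by (auto simp: Clw_def)
  ultimately show ?thesis by (simp add: bal_def cint_def)
qed

lemma neg_var_bal_le:
  assumes nonneg: "\<forall>B\<in>sets borel. 0 \<le> chg P N B" and B: "B \<in> sets borel" "bounded B"
  shows "neg_var (bal q P N) B \<le> ereal (correction B)"
  unfolding neg_var_def
proof (rule SUP_least)
  fix A assume "A \<in> {A. A \<in> sets borel \<and> A \<subseteq> B}"
  then have A: "A \<in> sets borel" "bounded A" "A \<subseteq> B" using bounded_subset[OF B(2)] by auto
  have "- bal q P N A \<le> correction A"
    using abs_bal_diff_le[OF A(1,2)] bal_0_nonneg[OF nonneg A(1,2)] by linarith
  also have "\<dots> \<le> correction B"
    using sum_correction_le[of "{A}" B] A B by (simp add: disjoint_def)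
  finally show "ereal (- bal q P N A) \<le> ereal (correction B)" by simp
qed

end

theorem mainTheorem8:
  fixes P N :: "complex measure" and q :: nat
  assumes charge: "jordan_charge P N"
    and supp: "compact_support P N"
    and conv: "\<exists>r0>0. \<forall>k\<in>{1..q}.
        set_integrable P (ball 0 r0 \<inter> Cup) (\<lambda>z. Im (1 / z ^ k)) \<and>
        set_integrable N (ball 0 r0 \<inter> Cup) (\<lambda>z. Im (1 / z ^ k))"
  shows "(\<forall>t::real. distR (bal q P N) t =
            distR (bal 0 P N) t +
            (1 / pi) * (\<Sum>k=1..q. cint P N Cup (\<lambda>z. Im (1 / z ^ k)) * t ^ k / real k))
       \<and> (\<forall>B. B \<in> sets borel \<and> bounded B \<longrightarrow>
            pos_var (bal q P N) B \<le> tot_var (bal q P N) B \<and>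
            tot_var (bal q P N) B \<le> tot_var (bal 0 P N) B +
              ereal ((1 / pi) * (\<Sum>k=1..q. \<bar>cint P N Cup (\<lambda>z. Im (1 / z ^ k))\<bar> * lam k B)))
       \<and> ((\<forall>B\<in>sets borel. 0 \<le> chg P N B) \<longrightarrow>
          (\<forall>B. B \<in> sets borel \<and> bounded B \<longrightarrow>
            neg_var (bal q P N) B \<le>
              ereal ((1 / pi) * (\<Sum>k=1..q. \<bar>cint P N Cup (\<lambda>z. Im (1 / z ^ k))\<bar> * lam k B))))"
proof -
  from conv obtain r0 where r0: "r0 > 0" and near_0: "\<forall>k\<in>{1..q}.
      set_integrable P (ball 0 r0 \<inter> Cup) (\<lambda>z. Im (1 / z ^ k)) \<and>
      set_integrable N (ball 0 r0 \<inter> Cup) (\<lambda>z. Im (1 / z ^ k))" by blast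
  interpret balayage_charge P N q
  proof
    show "jordan_charge P N" by (rule charge)
    fix k assume "k \<in> {1..q}"
    then show "set_integrable P Cup (\<lambda>z. Im (1 / z ^ k))" "set_integrable N Cup (\<lambda>z. Im (1 / z ^ k))"
      using near_0 charge Cup_borel r0
      by (auto intro: set_integrable_Im_inverse_power simp: jordan_charge_def)
  qed
  show ?thesis
    using distR_bal pos_var_le_tot_var tot_var_bal_le neg_var_bal_le by blast
qed

end
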